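(* Let $\hat{\mathbb{N}}$ be the set of odd integers $n\ge 3$, let $n \in \hat{\mathbb{N}}$ and $M \subseteq \hat{\mathbb{N}} \setminus \{n\}$. Then $\mathrm{pPol}\, R^{0,2}_n \not\supseteq \bigcap_{m \in M} \mathrm{pPol}\, R^{0,2}_m$.
   Context: Partial functions are on $\{0,1\}$: an $n$-ary partial function is a map $f:\operatorname{dom} f\to\{0,1\}$ with $\operatorname{dom} f\subseteq\{0,1\}^n$; $P_{\mathbf{2}}$ is the set of all of them, and an empty intersection of subsets of $P_{\mathbf{2}}$ is understood as $P_{\mathbf{2}}$. For $\rho\subseteq\{0,1\}^h$, $\mathrm{pPol}\,\rho$ is the set of partial functions $f$ such that for every $h\times n$ matrix whose rows lie in $\operatorname{dom} f$ and whose columns lie in $\rho$, the column obtained by applying $f$ row-wise lies in $\rho$. Let $\rho_{0,2}=\{(0,0),(0,1),(1,0)\}$. For $n\ge2$, $R^{0,2}_{C,n}=\{(x_1,\dots,x_n)\in\{0,1\}^n: (x_i,x_{i+1})\in\rho_{0,2}\text{ for } i\in[n], \text{ with } x_{n+1}:=x_1\}$, $R^{0,2}_{K,n}=\{(x_1,\dots,x_n): (x_i,x_j)\in\rho_{0,2}\text{ for all } i\ne j\}$, and $R^{0,2}_n=R^{0,2}_{C,n}\times R^{0,2}_{K,n}\subseteq\{0,1\}^{2n}$ (tuples $(x_1,\dots,x_{2n})$ with $(x_1,\dots,x_n)\in R^{0,2}_{C,n}$ and $(x_{n+1},\dots,x_{2n})\in R^{0,2}_{K,n}$). *)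

theory Defs
  imports Main
begin

text \<open>Elements of {0,1} are represented by bool (False = 0, True = 1).
  Tuples in {0,1}^h are bool lists of length h.
  An n-ary partial function is a pair (n, f) with f :: bool list => bool option
  whose domain (where f is defined) consists of lists of length n.\<close>

type_synonym pfun = "nat \<times> (bool list \<Rightarrow> bool option)"

definition P2 :: "pfun set" where
  "P2 = {(n, f). dom f \<subseteq> {xs. length xs = n}}"

text \<open>pPol of an h-ary relation rho: every h x n matrix given by its list of h rows,
  rows in dom f, columns in rho, yields the column of values in rho.\<close>
definition pPol :: "nat \<Rightarrow> bool list set \<Rightarrow> pfun set" where
  "pPol h \<rho> = {(n, f) \<in> P2. \<forall>rows. length rows = h \<and> (\<forall>r\<in>set rows. r \<in> dom f)
      \<and> (\<forall>j<n. map (\<lambda>r. r ! j) rows \<in> \<rho>)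
      \<longrightarrow> map (\<lambda>r. the (f r)) rows \<in> \<rho>}"

definition rho02 :: "(bool \<times> bool) set" where
  "rho02 = {(False, False), (False, True), (True, False)}"

definition RC02 :: "nat \<Rightarrow> bool list set" where
  "RC02 n = {xs. length xs = n \<and> (\<forall>i<n. (xs ! i, xs ! ((i + 1) mod n)) \<in> rho02)}"

definition RK02 :: "nat \<Rightarrow> bool list set" where
  "RK02 n = {xs. length xs = n \<and> (\<forall>i<n. \<forall>j<n. i \<noteq> j \<longrightarrow> (xs ! i, xs ! j) \<in> rho02)}"

definition R02 :: "nat \<Rightarrow> bool list set" where
  "R02 n = {xs @ ys | xs ys. xs \<in> RC02 n \<and> ys \<in> RK02 n}"

definition Nhat :: "nat set" where
  "Nhat = {n. odd n \<and> 3 \<le> n}"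

end

theory Submission
  imports Defs
begin

text \<open>A tuple lies in \<open>R\<^sup>0\<^sup>,\<^sup>2\<^sub>n\<close> iff it is the characteristic vector of an independent set
  of the graph \<open>G\<^sub>n = C\<^sub>n \<uplus> K\<^sub>n\<close> on \<open>2n\<close> vertices. For a graph \<open>G\<close> take the matrix whose columns
  are the independent sets of size at most two, and the partial function defined on its rows
  that returns the indicator of a vertex set \<open>S\<close>. Rows of a matrix whose columns are independent
  sets of \<open>H\<close> then describe a homomorphism \<open>H \<rightarrow> G\<close>, so the function preserves \<open>R\<^sub>H\<close> as soon as
  every such homomorphism pulls \<open>S\<close> back to an independent set, while it fails to preserve
  \<open>R\<^sub>G\<close> when \<open>S\<close> is an edge. Take \<open>G = G\<^sub>n\<close> and \<open>S = {0, 1}\<close>, an edge of \<open>C\<^sub>n\<close>. For odd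
  \<open>m \<noteq> n\<close> every homomorphism \<open>G\<^sub>m \<rightarrow> G\<^sub>n\<close> lands in \<open>K\<^sub>n\<close>: if \<open>m > n\<close> there is none, since \<open>K\<^sub>m\<close>
  fits in neither component, and if \<open>m < n\<close> both \<open>C\<^sub>m\<close> and the Hamiltonian cycle of \<open>K\<^sub>m\<close> are
  odd closed walks of length \<open>m\<close>, too short to wind around \<open>C\<^sub>n\<close>.\<close>

lemma pPolD:
  assumes "(n, f) \<in> pPol h \<rho>" "length rows = h" "set rows \<subseteq> dom f"
    "\<And>j. j < n \<Longrightarrow> map (\<lambda>r. r ! j) rows \<in> \<rho>"
  shows "map (\<lambda>r. the (f r)) rows \<in> \<rho>"
  using assms unfolding pPol_def by auto

lemma pPolI:
  assumes "(n, f) \<in> P2"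
    "\<And>rows. length rows = h \<Longrightarrow> set rows \<subseteq> dom f \<Longrightarrow>
      (\<And>j. j < n \<Longrightarrow> map (\<lambda>r. r ! j) rows \<in> \<rho>) \<Longrightarrow> map (\<lambda>r. the (f r)) rows \<in> \<rho>"
  shows "(n, f) \<in> pPol h \<rho>"
  using assms unfolding pPol_def by auto

definition indep_tuples :: "nat \<Rightarrow> (nat \<Rightarrow> nat \<Rightarrow> bool) \<Rightarrow> bool list set" where
  "indep_tuples N E = {zs. length zs = N \<and> (\<forall>i<N. \<forall>j<N. E i j \<longrightarrow> \<not> (zs ! i \<and> zs ! j))}"

text \<open>Independent sets of size at most two, a singleton \<open>{u}\<close> being encoded as \<open>(u, u)\<close>.\<close>

definition indep_pairs :: "nat \<Rightarrow> (nat \<Rightarrow> nat \<Rightarrow> bool) \<Rightarrow> (nat \<times> nat) list" where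
  "indep_pairs N E = filter (\<lambda>(u, w). \<not> E u w) (List.product [0..<N] [0..<N])"

definition vertex_row :: "nat \<Rightarrow> (nat \<Rightarrow> nat \<Rightarrow> bool) \<Rightarrow> nat \<Rightarrow> bool list" where
  "vertex_row N E v = map (\<lambda>(u, w). v = u \<or> v = w) (indep_pairs N E)"

definition indicator_map :: "nat \<Rightarrow> (nat \<Rightarrow> nat \<Rightarrow> bool) \<Rightarrow> nat set \<Rightarrow> bool list \<Rightarrow> bool option" where
  "indicator_map N E S xs = (if xs \<in> vertex_row N E ` {..<N}
     then Some (\<exists>v\<in>S \<inter> {..<N}. xs = vertex_row N E v) else None)"

lemma nth_vertex_row:
  assumes "j < length (indep_pairs N E)" "indep_pairs N E ! j = (u, w)"
  shows "vertex_row N E v ! j = (v = u \<or> v = w)"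
  using assms unfolding vertex_row_def by simp

lemma in_indep_pairs_iff: "(u, w) \<in> set (indep_pairs N E) \<longleftrightarrow> u < N \<and> w < N \<and> \<not> E u w"
  unfolding indep_pairs_def by auto

lemma vertex_rows_meet_iff:
  assumes "symp E" "irreflp E" "u < N" "v < N"
  shows "(\<exists>j<length (indep_pairs N E). vertex_row N E u ! j \<and> vertex_row N E v ! j)
    \<longleftrightarrow> \<not> E u v"
proof
  assume "\<exists>j<length (indep_pairs N E). vertex_row N E u ! j \<and> vertex_row N E v ! j"
  then obtain j a b where j: "j < length (indep_pairs N E)" "indep_pairs N E ! j = (a, b)"
    "vertex_row N E u ! j" "vertex_row N E v ! j"
    by (metis surj_pair)
  then have "\<not> E a b" by (metis nth_mem in_indep_pairs_iff)
  moreover have "u \<in> {a, b}" "v \<in> {a, b}" using j nth_vertex_row by auto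
  ultimately show "\<not> E u v" using assms(1,2) by (auto dest: sympD irreflpD)
next
  assume "\<not> E u v"
  then obtain j where "j < length (indep_pairs N E)" "indep_pairs N E ! j = (u, v)"
    using assms(3,4) by (metis in_indep_pairs_iff in_set_conv_nth)
  then show "\<exists>j<length (indep_pairs N E). vertex_row N E u ! j \<and> vertex_row N E v ! j"
    using nth_vertex_row by blast
qed

lemma vertex_row_inj:
  assumes "irreflp E" "u < N" "v < N" "vertex_row N E u = vertex_row N E v"
  shows "u = v"
proof -
  obtain j where "j < length (indep_pairs N E)" "indep_pairs N E ! j = (u, u)"
    using assms(1,2) by (metis in_indep_pairs_iff in_set_conv_nth irreflpD)
  then show ?thesis using assms(4) nth_vertex_row by metis
qed

lemma indicator_map_vertex_row:
  assumes "irreflp E" "v < N"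
  shows "indicator_map N E S (vertex_row N E v) = Some (v \<in> S)"
  using assms vertex_row_inj[OF assms(1)] unfolding indicator_map_def by auto

lemma dom_indicator_map: "dom (indicator_map N E S) = vertex_row N E ` {..<N}"
  unfolding indicator_map_def by (auto split: if_splits)

lemma indicator_map_in_P2: "(length (indep_pairs N E), indicator_map N E S) \<in> P2"
proof -
  have "dom (indicator_map N E S) \<subseteq> {xs. length xs = length (indep_pairs N E)}"
    unfolding dom_indicator_map by (auto simp: vertex_row_def)
  then show ?thesis unfolding P2_def by simp
qed

lemma indicator_map_not_pPol:
  assumes "symp E" "irreflp E" "u < N" "v < N" "E u v" "u \<in> S" "v \<in> S"
  shows "(length (indep_pairs N E), indicator_map N E S) \<notin> pPol N (indep_tuples N E)"
proof
  let ?rows = "map (vertex_row N E) [0..<N]"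
  assume "(length (indep_pairs N E), indicator_map N E S) \<in> pPol N (indep_tuples N E)"
  moreover have "set ?rows \<subseteq> dom (indicator_map N E S)"
    unfolding dom_indicator_map by auto
  moreover have "map (\<lambda>r. r ! j) ?rows \<in> indep_tuples N E"
    if "j < length (indep_pairs N E)" for j
  proof -
    obtain a b where ab: "indep_pairs N E ! j = (a, b)" by fastforce
    then have "\<not> E a b" using that by (metis nth_mem in_indep_pairs_iff)
    then have "\<not> E i k" if "i \<in> {a, b}" "k \<in> {a, b}" for i k
      using that assms(1,2) by (auto dest: sympD irreflpD)
    then show ?thesis
      unfolding indep_tuples_def using nth_vertex_row[OF that ab] by auto
  qed
  ultimately have "map (\<lambda>r. the (indicator_map N E S r)) ?rows \<in> indep_tuples N E"
    by (intro pPolD) auto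
  then show False
    using assms indicator_map_vertex_row[OF assms(2)] unfolding indep_tuples_def by auto
qed

lemma indicator_map_pPol:
  assumes "symp E" "irreflp E"
    and hom: "\<And>h. \<forall>i<K. h i < N \<Longrightarrow> \<forall>i<K. \<forall>j<K. F i j \<longrightarrow> E (h i) (h j) \<Longrightarrow>
      \<forall>i<K. \<forall>j<K. F i j \<longrightarrow> \<not> (h i \<in> S \<and> h j \<in> S)"
  shows "(length (indep_pairs N E), indicator_map N E S) \<in> pPol K (indep_tuples K F)"
proof (rule pPolI[OF indicator_map_in_P2])
  fix rows :: "bool list list"
  let ?L = "length (indep_pairs N E)"
  assume len: "length rows = K" and dom: "set rows \<subseteq> dom (indicator_map N E S)"
    and cols: "\<And>j. j < ?L \<Longrightarrow> map (\<lambda>r. r ! j) rows \<in> indep_tuples K F"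
  have "\<forall>i<K. \<exists>v<N. rows ! i = vertex_row N E v"
    using dom len unfolding dom_indicator_map by (force dest: nth_mem)
  then obtain h where h: "\<forall>i<K. h i < N \<and> rows ! i = vertex_row N E (h i)"
    by metis
  have "E (h i) (h j)" if "i < K" "j < K" "F i j" for i j
  proof -
    have "\<not> (rows ! i ! k \<and> rows ! j ! k)" if "k < ?L" for k
      using cols[OF that] \<open>i < K\<close> \<open>j < K\<close> \<open>F i j\<close> len unfolding indep_tuples_def by auto
    then show ?thesis using vertex_rows_meet_iff[OF assms(1,2)] h that by metis
  qed
  then have "\<forall>i<K. \<forall>j<K. F i j \<longrightarrow> \<not> (h i \<in> S \<and> h j \<in> S)" using hom h by blast
  moreover have "the (indicator_map N E S (rows ! i)) = (h i \<in> S)" if "i < K" for i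
    using h that indicator_map_vertex_row[OF assms(2)] by simp
  ultimately show "map (\<lambda>r. the (indicator_map N E S r)) rows \<in> indep_tuples K F"
    unfolding indep_tuples_def using len by auto
qed

definition cycle_adj :: "nat \<Rightarrow> nat \<Rightarrow> nat \<Rightarrow> bool" where
  "cycle_adj n a b \<longleftrightarrow> (a + 1) mod n = b \<or> (b + 1) mod n = a"

lemma int_dvd_succ_mod_diff: "int n dvd int ((a + 1) mod n) - int a - 1"
proof -
  have "int ((a + 1) mod n) - int a - 1 = - ((int a + 1) - (int a + 1) mod int n)"
    by (simp add: of_nat_mod add.commute)
  then show ?thesis by (metis dvd_minus_iff dvd_minus_mod)
qed

lemma cycle_adj_step:
  assumes "cycle_adj n a b" "a < n" "b < n"
  shows "\<exists>e::int. (e = 1 \<or> e = -1) \<and> int n dvd int b - int a - e"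
proof -
  consider "(a + 1) mod n = b" | "(b + 1) mod n = a"
    using assms(1) unfolding cycle_adj_def by blast
  then show ?thesis
  proof cases
    case 1
    then show ?thesis using int_dvd_succ_mod_diff[of n a] by blast
  next
    case 2
    then have "int n dvd int a - int b - 1" using int_dvd_succ_mod_diff[of n b] by simp
    moreover have "int b - int a - (-1) = - (int a - int b - 1)" by simp
    ultimately show ?thesis by (metis dvd_minus_iff)
  qed
qed

lemma sum_lessThan_rotate:
  fixes g :: "nat \<Rightarrow> 'a::comm_monoid_add"
  shows "(\<Sum>t<k. g ((t + 1) mod k)) = (\<Sum>t<k. g t)"
proof (cases k)
  case (Suc l)
  have "(\<Sum>t<Suc l. g ((t + 1) mod Suc l)) = (\<Sum>t<l. g (Suc t)) + g 0"
    by (simp add: sum.lessThan_Suc)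
  also have "\<dots> = (\<Sum>t<Suc l. g t)"
    by (subst sum.lessThan_Suc_shift) (simp add: add.commute)
  finally show ?thesis using Suc by simp
qed simp

text \<open>Each step moves by \<open>\<plusminus>1\<close> modulo \<open>n\<close>; the \<open>k\<close> steps add up to a multiple of \<open>n\<close> of
  absolute value at most \<open>k < n\<close>, hence to zero, which is impossible for an odd number of
  odd summands.\<close>

lemma cycle_no_short_odd_closed_walk:
  assumes "odd k" "k < n" "\<forall>t<k. w t < n" "\<forall>t<k. cycle_adj n (w t) (w ((t + 1) mod k))"
  shows False
proof -
  have "\<forall>t<k. \<exists>e::int. (e = 1 \<or> e = -1) \<and> int n dvd int (w ((t + 1) mod k)) - int (w t) - e"
    using assms(3,4) cycle_adj_step by (metis mod_less_divisor gr_implies_not0 neq0_conv)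
  then obtain e :: "nat \<Rightarrow> int"
    where e: "\<forall>t<k. (e t = 1 \<or> e t = -1) \<and> int n dvd int (w ((t + 1) mod k)) - int (w t) - e t"
    by metis
  have "(\<Sum>t<k. int (w ((t + 1) mod k)) - int (w t) - e t) = - (\<Sum>t<k. e t)"
    using sum_lessThan_rotate[of "\<lambda>t. int (w t)" k] by (simp add: sum_subtractf)
  moreover have "int n dvd (\<Sum>t<k. int (w ((t + 1) mod k)) - int (w t) - e t)"
    using e by (intro dvd_sum) auto
  ultimately have dvd: "int n dvd (\<Sum>t<k. e t)" by simp
  have "{t \<in> {..<k}. odd (e t)} = {..<k}" using e by auto
  then have "odd (\<Sum>t<k. e t)" using assms(1) by (simp add: even_sum_iff)
  then have "int n \<le> \<bar>\<Sum>t<k. e t\<bar>"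
    using dvd_imp_le_int[OF _ dvd] by (metis abs_of_nat even_zero)
  also have "\<dots> \<le> (\<Sum>t<k. \<bar>e t\<bar>)" by (rule sum_abs)
  also have "\<dots> = (\<Sum>t<k. 1)" using e by (intro sum.cong) auto
  finally show False using assms(2) by simp
qed

definition cycle_clique_edge :: "nat \<Rightarrow> nat \<Rightarrow> nat \<Rightarrow> bool" where
  "cycle_clique_edge n u v \<longleftrightarrow> u \<noteq> v \<and> (if u < n then v < n \<and> cycle_adj n u v else n \<le> v)"

lemma symp_cycle_clique_edge: "symp (cycle_clique_edge n)"
  unfolding symp_def cycle_clique_edge_def cycle_adj_def by auto

lemma irreflp_cycle_clique_edge: "irreflp (cycle_clique_edge n)"
  unfolding irreflp_def cycle_clique_edge_def by simp

lemma rho02_iff: "(a, b) \<in> rho02 \<longleftrightarrow> \<not> (a \<and> b)"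
  unfolding rho02_def by (cases a; cases b) auto

lemma add_one_mod_neq_self:
  fixes n i :: nat
  assumes "2 \<le> n" "i < n"
  shows "(i + 1) mod n \<noteq> i"
proof (cases "i + 1 = n")
  case True
  then show ?thesis using assms by auto
next
  case False
  then show ?thesis using assms by simp
qed

text \<open>For \<open>m = 1\<close> the cyclic condition of \<open>RC02\<close> would forbid the single entry to be 1.\<close>

lemma R02_eq_indep_tuples:
  assumes "2 \<le> m"
  shows "R02 m = indep_tuples (2 * m) (cycle_clique_edge m)"
proof (intro set_eqI iffI)
  fix zs assume "zs \<in> R02 m"
  then obtain xs ys where zs: "zs = xs @ ys" "xs \<in> RC02 m" "ys \<in> RK02 m"
    unfolding R02_def by blast
  show "zs \<in> indep_tuples (2 * m) (cycle_clique_edge m)"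
    unfolding indep_tuples_def
  proof (intro CollectI conjI allI impI notI)
    show "length zs = 2 * m" using zs unfolding RC02_def RK02_def by simp
    fix i j assume ij: "i < 2 * m" "j < 2 * m" "cycle_clique_edge m i j" "zs ! i \<and> zs ! j"
    show False
    proof (cases "i < m")
      case True
      then have "j < m" "(i + 1) mod m = j \<or> (j + 1) mod m = i"
        using ij(3) unfolding cycle_clique_edge_def cycle_adj_def by auto
      then show ?thesis using zs True ij(4) unfolding RC02_def rho02_iff
        by (auto simp: nth_append)
    next
      case False
      then have "m \<le> j" "i - m \<noteq> j - m" using ij(3) unfolding cycle_clique_edge_def by auto
      moreover have "i - m < m" "j - m < m" using ij by auto
      ultimately have "\<not> (ys ! (i - m) \<and> ys ! (j - m))"
        using zs(3) unfolding RK02_def rho02_iff by blast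
      moreover have "length xs = m" using zs(2) unfolding RC02_def by simp
      ultimately show ?thesis using False \<open>m \<le> j\<close> ij(4) by (simp add: zs(1) nth_append)
    qed
  qed
next
  fix zs assume zs: "zs \<in> indep_tuples (2 * m) (cycle_clique_edge m)"
  have "take m zs \<in> RC02 m"
    unfolding RC02_def rho02_iff
  proof (intro CollectI conjI allI impI notI)
    show "length (take m zs) = m" using zs unfolding indep_tuples_def by simp
    fix i assume i: "i < m" and both: "take m zs ! i \<and> take m zs ! ((i + 1) mod m)"
    have "cycle_clique_edge m i ((i + 1) mod m)"
      using i assms add_one_mod_neq_self[OF assms i] unfolding cycle_clique_edge_def cycle_adj_def by simp
    moreover have "i < 2 * m" "(i + 1) mod m < 2 * m"
      using assms i mod_less_divisor[of m "i + 1"] by linarith+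
    ultimately have "\<not> (zs ! i \<and> zs ! ((i + 1) mod m))"
      using zs unfolding indep_tuples_def by blast
    then show False using both i assms by simp
  qed
  moreover have "drop m zs \<in> RK02 m"
    unfolding RK02_def rho02_iff
  proof (intro CollectI conjI allI impI notI)
    show "length (drop m zs) = m" using zs unfolding indep_tuples_def by simp
    fix i j assume ij: "i < m" "j < m" "i \<noteq> j" "drop m zs ! i \<and> drop m zs ! j"
    have "cycle_clique_edge m (m + i) (m + j)" "m + i < 2 * m" "m + j < 2 * m"
      using ij unfolding cycle_clique_edge_def by auto
    then have "\<not> (zs ! (m + i) \<and> zs ! (m + j))"
      using zs unfolding indep_tuples_def by blast
    then show False using ij zs unfolding indep_tuples_def by simp
  qed
  ultimately show "zs \<in> R02 m"
    unfolding R02_def by (metis (mono_tags, lifting) append_take_drop_id mem_Collect_eq)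
qed

definition cycle_clique_hom :: "nat \<Rightarrow> nat \<Rightarrow> (nat \<Rightarrow> nat) \<Rightarrow> bool" where
  "cycle_clique_hom m n h \<longleftrightarrow> (\<forall>i<2 * m. h i < 2 * n) \<and>
     (\<forall>i<2 * m. \<forall>j<2 * m. cycle_clique_edge m i j \<longrightarrow> cycle_clique_edge n (h i) (h j))"

lemma cycle_clique_homD:
  assumes "cycle_clique_hom m n h" "i < 2 * m" "j < 2 * m" "cycle_clique_edge m i j"
  shows "cycle_clique_edge n (h i) (h j)"
  using assms unfolding cycle_clique_hom_def by blast

lemma cycle_clique_edge_same_side:
  "cycle_clique_edge n u v \<Longrightarrow> u < n \<longleftrightarrow> v < n"
  unfolding cycle_clique_edge_def by (auto split: if_splits)

lemma cycle_clique_edge_rotate: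
  assumes "2 \<le> m" "t < m" "c = 0 \<or> c = m"
  shows "cycle_clique_edge m (c + t) (c + (t + 1) mod m)"
  using assms add_one_mod_neq_self[OF assms(1,2)] unfolding cycle_clique_edge_def cycle_adj_def by auto

lemma less_double_cases:
  fixes i m :: nat
  assumes "i < 2 * m"
  obtains c t where "c = 0 \<or> c = m" "t < m" "i = c + t"
proof (cases "i < m")
  case True
  then show ?thesis using that[of 0 i] by simp
next
  case False
  then show ?thesis using that[of m "i - m"] assms by simp
qed

lemma cycle_clique_hom_same_side:
  assumes "cycle_clique_hom m n h" "2 \<le> m" "c = 0 \<or> c = m" "t < m"
  shows "h (c + t) < n \<longleftrightarrow> h c < n"
  using assms(4)
proof (induction t)
  case (Suc t)
  have "cycle_clique_edge m (c + t) (c + Suc t)"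
    using cycle_clique_edge_rotate[OF assms(2) _ assms(3), of t] Suc.prems by simp
  moreover have "c + t < 2 * m" "c + Suc t < 2 * m" using Suc.prems assms(3) by auto
  ultimately have "h (c + t) < n \<longleftrightarrow> h (c + Suc t) < n"
    using cycle_clique_homD[OF assms(1)] cycle_clique_edge_same_side by blast
  then show ?case using Suc by simp
qed simp

lemma cycle_clique_hom_into_larger:
  assumes "cycle_clique_hom m n h" "odd m" "3 \<le> m" "m < n" "i < 2 * m"
  shows "n \<le> h i"
proof -
  obtain c t where c: "c = 0 \<or> c = m" and "t < m" "i = c + t"
    using less_double_cases[OF assms(5)] .
  have side: "\<forall>t<m. h (c + t) < n \<longleftrightarrow> h c < n"
    using cycle_clique_hom_same_side[OF assms(1) _ c] assms(3) by simp
  have "\<not> h c < n"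
  proof
    assume "h c < n"
    moreover have "cycle_clique_edge n (h (c + t)) (h (c + (t + 1) mod m))" if "t < m" for t
    proof (rule cycle_clique_homD[OF assms(1)])
      show "cycle_clique_edge m (c + t) (c + (t + 1) mod m)"
        using cycle_clique_edge_rotate[OF _ that c] assms(3) by simp
      have "(t + 1) mod m < m" using that by simp
      then show "c + t < 2 * m" "c + (t + 1) mod m < 2 * m" using c that by linarith+
    qed
    ultimately show False
      using cycle_no_short_odd_closed_walk[OF assms(2,4), of "\<lambda>t. h (c + t)"] side
      unfolding cycle_clique_edge_def by simp
  qed
  then show ?thesis using side \<open>t < m\<close> \<open>i = c + t\<close> leI by blast
qed

text \<open>Pigeonhole: \<open>K\<^sub>m\<close> maps injectively into one component of \<open>G\<^sub>n\<close>, each having \<open>n < m\<close>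
  vertices.\<close>

lemma no_cycle_clique_hom_into_smaller:
  assumes "cycle_clique_hom m n h" "2 \<le> m" "n < m"
  shows False
proof -
  let ?clique = "h ` (\<lambda>t. m + t) ` {..<m}"
  have "inj_on h ((\<lambda>t. m + t) ` {..<m})"
  proof (rule inj_onI, rule ccontr)
    fix i j assume "i \<in> (\<lambda>t. m + t) ` {..<m}" "j \<in> (\<lambda>t. m + t) ` {..<m}" "h i = h j" "i \<noteq> j"
    then show False
      using cycle_clique_homD[OF assms(1), of i j] unfolding cycle_clique_edge_def by auto
  qed
  then have "card ?clique = m" by (simp add: card_image inj_on_def)
  moreover have "?clique \<subseteq> {..<n} \<or> ?clique \<subseteq> {n..<2 * n}"
  proof -
    have "h (m + t) < n \<longleftrightarrow> h m < n" "h (m + t) < 2 * n" if "t < m" for t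
      using cycle_clique_hom_same_side[OF assms(1,2), of m t] assms(1) that
      unfolding cycle_clique_hom_def by auto
    then show ?thesis by (cases "h m < n") (auto simp: not_less)
  qed
  then have "card ?clique \<le> n" by (auto dest: card_mono[rotated])
  ultimately show False using assms(3) by simp
qed

lemma cycle_clique_hom_avoids_cycle_part:
  assumes "cycle_clique_hom m n h" "odd m" "3 \<le> m" "m \<noteq> n" "i < 2 * m"
  shows "n \<le> h i"
proof (cases "m < n")
  case True
  then show ?thesis using cycle_clique_hom_into_larger assms by blast
next
  case False
  then show ?thesis using no_cycle_clique_hom_into_smaller[OF assms(1)] assms(3,4) by simp
qed

definition cycle_clique_pfun :: "nat \<Rightarrow> pfun" where
  "cycle_clique_pfun n = (length (indep_pairs (2 * n) (cycle_clique_edge n)),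
     indicator_map (2 * n) (cycle_clique_edge n) {0, 1})"

lemma cycle_clique_pfun_in_P2: "cycle_clique_pfun n \<in> P2"
  unfolding cycle_clique_pfun_def by (rule indicator_map_in_P2)

lemma cycle_clique_pfun_pPol_R02:
  assumes "odd m" "3 \<le> m" "m \<noteq> n" "2 \<le> n"
  shows "cycle_clique_pfun n \<in> pPol (2 * m) (R02 m)"
proof -
  have "\<forall>i<2 * m. \<forall>j<2 * m. cycle_clique_edge m i j \<longrightarrow> \<not> (h i \<in> {0, 1} \<and> h j \<in> {0, 1})"
    if "\<forall>i<2 * m. h i < 2 * n"
      "\<forall>i<2 * m. \<forall>j<2 * m. cycle_clique_edge m i j \<longrightarrow> cycle_clique_edge n (h i) (h j)" for h
  proof -
    have "cycle_clique_hom m n h" using that unfolding cycle_clique_hom_def by blast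
    then show ?thesis using cycle_clique_hom_avoids_cycle_part[OF _ assms(1-3)] assms(4)
      by fastforce
  qed
  moreover have "R02 m = indep_tuples (2 * m) (cycle_clique_edge m)"
    using assms(2) by (intro R02_eq_indep_tuples) simp
  ultimately show ?thesis unfolding cycle_clique_pfun_def
    by (simp add: indicator_map_pPol symp_cycle_clique_edge irreflp_cycle_clique_edge)
qed

lemma cycle_clique_pfun_not_pPol_R02:
  assumes "2 \<le> n"
  shows "cycle_clique_pfun n \<notin> pPol (2 * n) (R02 n)"
proof -
  have "cycle_clique_edge n 0 1" using assms unfolding cycle_clique_edge_def cycle_adj_def by simp
  then show ?thesis
    unfolding cycle_clique_pfun_def R02_eq_indep_tuples[OF assms] using assms
    by (intro indicator_map_not_pPol symp_cycle_clique_edge irreflp_cycle_clique_edge) auto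
qed

theorem mainTheorem16:
  assumes "n \<in> Nhat" and "M \<subseteq> Nhat - {n}"
  shows "\<not> (P2 \<inter> (\<Inter>m\<in>M. pPol (2 * m) (R02 m)) \<subseteq> pPol (2 * n) (R02 n))"
proof
  assume sub: "P2 \<inter> (\<Inter>m\<in>M. pPol (2 * m) (R02 m)) \<subseteq> pPol (2 * n) (R02 n)"
  have n: "3 \<le> n" using assms(1) unfolding Nhat_def by simp
  have "cycle_clique_pfun n \<in> pPol (2 * m) (R02 m)" if "m \<in> M" for m
    using that assms(2) n by (intro cycle_clique_pfun_pPol_R02) (auto simp: Nhat_def)
  then have "cycle_clique_pfun n \<in> pPol (2 * n) (R02 n)"
    using sub cycle_clique_pfun_in_P2 by blast
  then show False using cycle_clique_pfun_not_pPol_R02 n by simp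
qed

end
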